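(* Let $H$ be an abelian group with an alternating $\mathbb{Z}$-bilinear form $\langle-,-\rangle\neq0$. Let $K:\mathbb{Q}[H]\to\mathbb{Q}\otimes_{\mathbb{Z}}H$ be the $\mathbb{Q}$-linear map with $K([x])=1\otimes x$, and $\mathfrak g_K=\ker K$ (a Lie subalgebra of $\mathbb{Q}[H]$). Then the composition \[ H_2(\mathfrak g_K)\longrightarrow H_2(\mathbb{Q}[H])\longrightarrow H_2(\mathbb{Q}[H^{(1)}]) \] is surjective, where the first map is induced by the inclusion $\mathfrak g_K\hookrightarrow\mathbb{Q}[H]$ and the second is induced by the projection $\varpi^{(1)}:\mathbb{Q}[H]=\mathbb{Q}[\ker\mu]\oplus\mathbb{Q}[H^{(1)}]\to\mathbb{Q}[H^{(1)}]$.
   Context: $\mu:H\to\mathrm{Hom}_{\mathbb{Z}}(H,\mathbb{Z})$, $\mu(x)(y)=\langle x,y\rangle$; $H^{(1)}:=H\setminus\ker\mu$. $\mathbb{Q}[S]$ ($S\subset H$) is the $\mathbb{Q}$-vector space with basis symbols $[x]$, $x\in S$ (note $c[x]\ne[cx]$); $\mathbb{Q}[H]$ is a Lie algebra via $[[x],[y]]=\langle x,y\rangle[x+y]$, $\mathbb{Q}[\ker\mu]$ is its center and $\mathbb{Q}[H^{(1)}]$ its derived subalgebra, and $\varpi^{(1)}$ is a Lie algebra homomorphism. $H_2$ denotes Lie algebra homology with trivial coefficients $\mathbb{Q}$ (Chevalley–Eilenberg complex). *)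

theory Defs
  imports Complex_Main
begin

text \<open>
  Q[S] (S a subset of H) is modelled by finitely supported functions H -> rat
  vanishing outside S; the basis symbol [x] is delta x.
\<close>

definition supp :: "('b \<Rightarrow> rat) \<Rightarrow> 'b set" where
  "supp f = {x. f x \<noteq> 0}"

definition QS :: "'a set \<Rightarrow> ('a \<Rightarrow> rat) set" where
  "QS S = {f. finite (supp f) \<and> supp f \<subseteq> S}"

abbreviation QH :: "('a \<Rightarrow> rat) set" where
  "QH \<equiv> QS UNIV"

definition delta :: "'a \<Rightarrow> 'a \<Rightarrow> rat" where
  "delta x = (\<lambda>y. if y = x then 1 else 0)"

inductive_set qspan :: "('b \<Rightarrow> rat) set \<Rightarrow> ('b \<Rightarrow> rat) set" for S where
  zero: "(\<lambda>_. 0) \<in> qspan S"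
| add: "v \<in> S \<Longrightarrow> w \<in> qspan S \<Longrightarrow> (\<lambda>x. q * v x + w x) \<in> qspan S"

definition kermu :: "('a \<Rightarrow> 'a \<Rightarrow> int) \<Rightarrow> 'a set" where
  "kermu B = {x. \<forall>y. B x y = 0}"

definition H1 :: "('a \<Rightarrow> 'a \<Rightarrow> int) \<Rightarrow> 'a set" where
  "H1 B = UNIV - kermu B"

text \<open>Lie bracket on Q[H]: the bilinear extension of [[x],[y]] = <x,y>[x+y].\<close>
definition br :: "('a::ab_group_add \<Rightarrow> 'a \<Rightarrow> int) \<Rightarrow> ('a \<Rightarrow> rat) \<Rightarrow> ('a \<Rightarrow> rat) \<Rightarrow> 'a \<Rightarrow> rat" where
  "br B a b = (\<lambda>z. \<Sum>x\<in>supp a. a x * b (z - x) * of_int (B x (z - x)))"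

definition varpi1 :: "('a \<Rightarrow> 'a \<Rightarrow> int) \<Rightarrow> ('a \<Rightarrow> rat) \<Rightarrow> 'a \<Rightarrow> rat" where
  "varpi1 B f = (\<lambda>x. if x \<in> H1 B then f x else 0)"

text \<open>
  We use the presentation
  Q \<otimes>_Z H = Q[H] / span{[x+y] - [x] - [y]} (Q-vector space generated by
  the symbols [x] subject to additivity), under which K is the quotient map;
  hence g_K = ker K is that span.
\<close>
definition gK :: "('a::ab_group_add \<Rightarrow> rat) set" where
  "gK = qspan {(\<lambda>z. delta (x + y) z - delta x z - delta y z) | x y. True}"

text \<open>
  Exterior powers: Lambda^2 Q[H] is modelled by alternating finitely supported
  functions H x H -> rat, with a \<and> b = wedge2 a b; then
  c = 1/2 \<Sum>_(x,y) c(x,y) [x]\<and>[y].  Similarly Lambda^3 with wedge3 and factor 1/6.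
  For a subspace g of Q[H], Lambda^k g is the span of wedges of elements of g
  (inside Lambda^k Q[H]).
\<close>
definition wedge2 :: "('a \<Rightarrow> rat) \<Rightarrow> ('a \<Rightarrow> rat) \<Rightarrow> 'a \<times> 'a \<Rightarrow> rat" where
  "wedge2 a b = (\<lambda>(x, y). a x * b y - a y * b x)"

definition wedge3 :: "('a \<Rightarrow> rat) \<Rightarrow> ('a \<Rightarrow> rat) \<Rightarrow> ('a \<Rightarrow> rat) \<Rightarrow> 'a \<times> 'a \<times> 'a \<Rightarrow> rat" where
  "wedge3 a b c = (\<lambda>(x, y, z).
      a x * b y * c z + a y * b z * c x + a z * b x * c y
    - a x * b z * c y - a z * b y * c x - a y * b x * c z)"

definition Lambda2 :: "('a \<Rightarrow> rat) set \<Rightarrow> ('a \<times> 'a \<Rightarrow> rat) set" where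
  "Lambda2 g = qspan {wedge2 a b | a b. a \<in> g \<and> b \<in> g}"

definition Lambda3 :: "('a \<Rightarrow> rat) set \<Rightarrow> ('a \<times> 'a \<times> 'a \<Rightarrow> rat) set" where
  "Lambda3 g = qspan {wedge3 a b c | a b c. a \<in> g \<and> b \<in> g \<and> c \<in> g}"

text \<open>Chevalley-Eilenberg differentials (trivial coefficients):
  d(a \<and> b) = - [a,b],
  d(a \<and> b \<and> c) = - [a,b] \<and> c + [a,c] \<and> b - [b,c] \<and> a.\<close>
definition d2 :: "('a::ab_group_add \<Rightarrow> 'a \<Rightarrow> int) \<Rightarrow> ('a \<times> 'a \<Rightarrow> rat) \<Rightarrow> 'a \<Rightarrow> rat" where
  "d2 B c = (\<lambda>w. (1/2) * (\<Sum>(x, y)\<in>supp c.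
      c (x, y) * (- br B (delta x) (delta y) w)))"

definition d3 :: "('a::ab_group_add \<Rightarrow> 'a \<Rightarrow> int) \<Rightarrow> ('a \<times> 'a \<times> 'a \<Rightarrow> rat) \<Rightarrow> 'a \<times> 'a \<Rightarrow> rat" where
  "d3 B t = (\<lambda>p. (1/6) * (\<Sum>(x, y, z)\<in>supp t. t (x, y, z) *
      (- wedge2 (br B (delta x) (delta y)) (delta z) p
       + wedge2 (br B (delta x) (delta z)) (delta y) p
       - wedge2 (br B (delta y) (delta z)) (delta x) p)))"

definition ext2 :: "(('a \<Rightarrow> rat) \<Rightarrow> ('a \<Rightarrow> rat)) \<Rightarrow> ('a \<times> 'a \<Rightarrow> rat) \<Rightarrow> 'a \<times> 'a \<Rightarrow> rat" where
  "ext2 phi c = (\<lambda>p. (1/2) * (\<Sum>(x, y)\<in>supp c.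
      c (x, y) * wedge2 (phi (delta x)) (phi (delta y)) p))"

end

theory Submission
  imports Defs
begin

text \<open>
  The Chevalley--Eilenberg differentials preserve the weight \<open>x + y\<close> of a basis wedge \<open>[x] \<and> [y]\<close>,
  so a 2-cycle \<open>z\<close> of \<open>\<rat>[H1 B]\<close> can be treated one weight \<open>h\<close> at a time, in terms of the chains
  \<open>[t] \<and> [h - t]\<close>.  If \<open>h \<in> H1 B\<close>, the boundaries \<open>d([a] \<and> [b] \<and> [h - a - b])\<close> of 3-chains of
  \<open>\<rat>[H1 B]\<close> show that, modulo boundaries, \<open>[t] \<and> [h - t]\<close> is \<open>\<langle>t, h\<rangle>\<close> times one fixed chain; so the
  weight-\<open>h\<close> part of \<open>z\<close> is homologous to \<open>\<Sum>\<^bsub>x+y=h\<^esub> z(x,y) \<langle>x, y\<rangle>\<close> times that chain, and this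
  coefficient vanishes because \<open>z\<close> is a cycle.  If \<open>h \<in> kermu B\<close>, then \<open>[x] \<and> [h - x]\<close> is homologous
  to the image of the cycle \<open>([x] - \<onehalf>[2x]) \<and> ([h - x] - \<onehalf>[h - 2x] - \<onehalf>[h])\<close> of \<open>\<Lambda>\<^sup>2 gK\<close>.
\<close>

section \<open>Finitely supported functions and spans\<close>

lemma delta_apply: "delta x y = (if y = x then 1 else 0)"
  by (simp add: delta_def)

lemma supp_delta: "supp (delta x) = {x}"
  by (auto simp: supp_def delta_apply)

lemma sum_mult_delta: "finite (supp z) \<Longrightarrow> (\<Sum>q\<in>supp z. z q * delta q t) = z t"
  by (auto simp: delta_apply supp_def if_distrib cong: if_cong)

lemma wedge2_apply: "wedge2 a b (x, y) = a x * b y - a y * b x"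
  by (simp add: wedge2_def)

lemma supp_lincomb: "supp (\<lambda>x. q * v x + w x) \<subseteq> supp v \<union> supp w"
  by (auto simp: supp_def)

lemma finite_supp_lincomb:
  "finite (supp v) \<Longrightarrow> finite (supp w) \<Longrightarrow> finite (supp (\<lambda>x. q * v x + w x))"
  by (rule finite_subset[OF supp_lincomb]) simp

lemma finite_supp_zero: "finite (supp (\<lambda>_. 0))"
  by (simp add: supp_def)

lemma finite_supp_add: "finite (supp f) \<Longrightarrow> finite (supp g) \<Longrightarrow> finite (supp (\<lambda>t. f t + g t))"
  using finite_supp_lincomb[of f g 1] by simp

lemma finite_supp_diff: "finite (supp f) \<Longrightarrow> finite (supp g) \<Longrightarrow> finite (supp (\<lambda>t. f t - g t))"
  using finite_supp_lincomb[of g f "-1"] by simp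

lemma finite_supp_scale: "finite (supp f) \<Longrightarrow> finite (supp (\<lambda>t. q * f t))"
  using finite_supp_lincomb[of f "\<lambda>_. 0" q] by (simp add: finite_supp_zero)

lemma supp_wedge2: "supp (wedge2 a b) \<subseteq> (supp a \<union> supp b) \<times> (supp a \<union> supp b)"
  by (auto simp: supp_def wedge2_def)

lemma finite_supp_wedge2: "finite (supp a) \<Longrightarrow> finite (supp b) \<Longrightarrow> finite (supp (wedge2 a b))"
  by (rule finite_subset[OF supp_wedge2]) simp

lemma finite_supp_wedge3:
  "finite (supp a) \<Longrightarrow> finite (supp b) \<Longrightarrow> finite (supp c) \<Longrightarrow> finite (supp (wedge3 a b c))"
  by (rule finite_subset[of _ "(supp a \<union> supp b \<union> supp c) \<times> (supp a \<union> supp b \<union> supp c)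
                                 \<times> (supp a \<union> supp b \<union> supp c)"])
     (auto simp: supp_def wedge3_def)

lemma qspan_base: "v \<in> S \<Longrightarrow> v \<in> qspan S"
  using qspan.add[OF _ qspan.zero, of v S 1] by simp

lemma qspan_lincomb:
  "v \<in> qspan S \<Longrightarrow> w \<in> qspan S \<Longrightarrow> (\<lambda>x. q * v x + w x) \<in> qspan S"
proof (induction v arbitrary: w rule: qspan.induct)
  case zero
  then show ?case by simp
next
  case (add s v r)
  then have "(\<lambda>x. q * v x + w x) \<in> qspan S" by blast
  from qspan.add[OF add(1) this, of "q * r"] show ?case
    by (simp add: algebra_simps)
qed

lemma qspan_sum:
  "finite I \<Longrightarrow> (\<And>i. i \<in> I \<Longrightarrow> F i \<in> qspan S) \<Longrightarrow> (\<lambda>x. \<Sum>i\<in>I. q i * F i x) \<in> qspan S"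
proof (induction I rule: finite_induct)
  case empty
  then show ?case using qspan.zero by simp
next
  case (insert i I)
  then show ?case using qspan_lincomb[of "F i" S "\<lambda>x. \<Sum>i\<in>I. q i * F i x" "q i"] by simp
qed

lemma finite_supp_qspan:
  assumes "\<And>v. v \<in> S \<Longrightarrow> finite (supp v)" and "w \<in> qspan S"
  shows "finite (supp w)"
  using assms(2) by induction (auto intro: finite_supp_lincomb finite_supp_zero assms(1))

lemma finite_supp_Lambda2_QS: "z \<in> Lambda2 (QS S) \<Longrightarrow> finite (supp z)"
  unfolding Lambda2_def by (rule finite_supp_qspan) (auto intro: finite_supp_wedge2 simp: QS_def)

lemma finite_supp_Lambda3_QS: "z \<in> Lambda3 (QS S) \<Longrightarrow> finite (supp z)"
  unfolding Lambda3_def by (rule finite_supp_qspan) (auto intro: finite_supp_wedge3 simp: QS_def)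

lemma finite_supp_gK: "a \<in> gK \<Longrightarrow> finite (supp a)"
  unfolding gK_def
proof (rule finite_supp_qspan)
  fix v :: "'a \<Rightarrow> rat"
  assume "v \<in> {\<lambda>z. delta (x + y) z - delta x z - delta y z |x y. True}"
  then obtain x y where "v = (\<lambda>z. delta (x + y) z - delta x z - delta y z)" by blast
  then have "supp v \<subseteq> {x, y, x + y}" by (auto simp: supp_def delta_apply)
  then show "finite (supp v)" by (rule finite_subset) simp
qed

lemma finite_supp_Lambda2_gK: "z \<in> Lambda2 gK \<Longrightarrow> finite (supp z)"
  unfolding Lambda2_def by (rule finite_supp_qspan) (auto intro: finite_supp_wedge2 finite_supp_gK)

lemma Lambda2_alternating: "z \<in> Lambda2 g \<Longrightarrow> z (y, x) = - z (x, y)"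
  unfolding Lambda2_def
  by (induction z rule: qspan.induct) (auto simp: wedge2_apply algebra_simps)

lemma supp_Lambda2_QS: "z \<in> Lambda2 (QS S) \<Longrightarrow> supp z \<subseteq> S \<times> S"
  unfolding Lambda2_def
proof (induction z rule: qspan.induct)
  case zero
  then show ?case by (simp add: supp_def)
next
  case (add v w q)
  then obtain a b where "v = wedge2 a b" "a \<in> QS S" "b \<in> QS S" by blast
  then have "supp v \<subseteq> S \<times> S" using supp_wedge2[of a b] by (auto simp: QS_def)
  then show ?case using supp_lincomb[of q v w] add.IH by blast
qed

section \<open>Linear extension from a basis\<close>

text \<open>The differentials and \<open>ext2\<close> are of this form (\<open>d2_eq_lift_basis\<close>, ...), with \<open>k = 1/2\<close> and
  \<open>k = 1/6\<close> compensating for the orderings of the factors of a basis wedge.\<close>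
definition lift_basis :: "rat \<Rightarrow> ('b \<Rightarrow> 'c \<Rightarrow> rat) \<Rightarrow> ('b \<Rightarrow> rat) \<Rightarrow> 'c \<Rightarrow> rat" where
  "lift_basis k G c = (\<lambda>w. k * (\<Sum>p\<in>supp c. c p * G p w))"

lemma lift_basis_eq_sum: "lift_basis k G c = (\<lambda>w. \<Sum>p\<in>supp c. (k * c p) * G p w)"
  by (simp add: lift_basis_def sum_distrib_left mult.assoc)

lemma lift_basis_on:
  assumes "finite S" and "supp c \<subseteq> S"
  shows "lift_basis k G c = (\<lambda>w. k * (\<Sum>p\<in>S. c p * G p w))"
  unfolding lift_basis_def
  by (rule ext, rule arg_cong[where f = "\<lambda>x. k * x"], rule sum.mono_neutral_left)
     (use assms in \<open>auto simp: supp_def\<close>)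

lemma lift_basis_zero: "lift_basis k G (\<lambda>_. 0) = (\<lambda>_. 0)"
  by (simp add: lift_basis_def supp_def)

lemma lift_basis_delta: "lift_basis k G (delta s) = (\<lambda>w. k * G s w)"
  by (simp add: lift_basis_def supp_delta delta_apply)

lemma lift_basis_lincomb:
  assumes "finite (supp c1)" and "finite (supp c2)"
  shows "lift_basis k G (\<lambda>p. q * c1 p + c2 p) = (\<lambda>w. q * lift_basis k G c1 w + lift_basis k G c2 w)"
proof -
  let ?S = "supp c1 \<union> supp c2"
  have S: "finite ?S" using assms by simp
  have "lift_basis k G (\<lambda>p. q * c1 p + c2 p) = (\<lambda>w. k * (\<Sum>p\<in>?S. (q * c1 p + c2 p) * G p w))"
    by (rule lift_basis_on[OF S]) (auto simp: supp_def)
  also have "\<dots> = (\<lambda>w. q * (k * (\<Sum>p\<in>?S. c1 p * G p w)) + k * (\<Sum>p\<in>?S. c2 p * G p w))"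
    by (simp add: algebra_simps sum.distrib sum_distrib_left)
  also have "\<dots> = (\<lambda>w. q * lift_basis k G c1 w + lift_basis k G c2 w)"
    by (simp add: lift_basis_on[OF S])
  finally show ?thesis .
qed

lemma lift_basis_add:
  "finite (supp f) \<Longrightarrow> finite (supp g) \<Longrightarrow>
   lift_basis k G (\<lambda>t. f t + g t) = (\<lambda>w. lift_basis k G f w + lift_basis k G g w)"
  using lift_basis_lincomb[of f g k G 1] by simp

lemma lift_basis_diff:
  "finite (supp f) \<Longrightarrow> finite (supp g) \<Longrightarrow>
   lift_basis k G (\<lambda>t. f t - g t) = (\<lambda>w. lift_basis k G f w - lift_basis k G g w)"
  using lift_basis_lincomb[of g f k G "-1"] by simp

lemma lift_basis_scale:
  "finite (supp f) \<Longrightarrow> lift_basis k G (\<lambda>t. q * f t) = (\<lambda>w. q * lift_basis k G f w)"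
  using lift_basis_lincomb[of f "\<lambda>_. 0" k G q] by (simp add: finite_supp_zero lift_basis_zero)

lemma lift_basis_add_kernel:
  "lift_basis k (\<lambda>p w. G1 p w + G2 p w) c = (\<lambda>w. lift_basis k G1 c w + lift_basis k G2 c w)"
  by (simp add: lift_basis_def algebra_simps sum.distrib)

lemma lift_basis_diff_kernel:
  "lift_basis k (\<lambda>p w. G1 p w - G2 p w) c = (\<lambda>w. lift_basis k G1 c w - lift_basis k G2 c w)"
  by (simp add: lift_basis_def algebra_simps sum_subtractf)

lemma lift_basis_sum:
  "finite I \<Longrightarrow> (\<And>i. i \<in> I \<Longrightarrow> finite (supp (F i))) \<Longrightarrow>
   lift_basis k G (\<lambda>p. \<Sum>i\<in>I. q i * F i p) = (\<lambda>w. \<Sum>i\<in>I. q i * lift_basis k G (F i) w)"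
proof (induction I rule: finite_induct)
  case empty
  then show ?case by (simp add: lift_basis_zero)
next
  case (insert i I)
  have "(\<lambda>p. \<Sum>i\<in>I. q i * F i p) \<in> qspan (F ` I)"
    by (rule qspan_sum) (auto intro: qspan_base insert.hyps)
  then have "finite (supp (\<lambda>p. \<Sum>i\<in>I. q i * F i p))"
    by (rule finite_supp_qspan[rotated]) (use insert.prems in auto)
  with insert show ?case
    using lift_basis_lincomb[of "F i" "\<lambda>p. \<Sum>i\<in>I. q i * F i p" k G "q i"] by simp
qed

lemma lift_basis_lift_basis:
  assumes "finite (supp c)" and "\<And>p. p \<in> supp c \<Longrightarrow> finite (supp (F p))"
  shows "lift_basis k' G (lift_basis k F c) = lift_basis k (\<lambda>p. lift_basis k' G (F p)) c"
  using lift_basis_sum[OF assms, where k = k' and G = G and q = "\<lambda>p. k * c p"]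
  by (simp add: lift_basis_eq_sum)

lemma lift_basis_cong:
  "(\<And>p. p \<in> supp c \<Longrightarrow> G p = G' p) \<Longrightarrow> lift_basis k G c = lift_basis k G' c"
  by (simp add: lift_basis_def)

lemma lift_basis_zero_kernel: "lift_basis k (\<lambda>_ _. 0) c = (\<lambda>_. 0)"
  by (simp add: lift_basis_def)

lemma lift_basis_in_qspan:
  assumes "finite (supp c)" and "\<And>p. p \<in> supp c \<Longrightarrow> F p \<in> qspan S"
  shows "lift_basis k F c \<in> qspan S"
  unfolding lift_basis_eq_sum by (rule qspan_sum[OF assms])

section \<open>Basis wedges and the differentials\<close>

definition basis2 :: "'a \<Rightarrow> 'a \<Rightarrow> 'a \<times> 'a \<Rightarrow> rat" where
  "basis2 p q = wedge2 (delta p) (delta q)"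

lemma basis2_eq_delta: "basis2 p q = (\<lambda>t. delta (p, q) t - delta (q, p) t)"
proof
  fix t :: "'a \<times> 'a"
  obtain u v where t: "t = (u, v)" by (cases t)
  show "basis2 p q t = delta (p, q) t - delta (q, p) t"
    unfolding t basis2_def wedge2_apply delta_apply
    by (cases "u = p"; cases "v = q"; cases "u = q"; cases "v = p"; simp)
qed

lemma basis2_swap: "basis2 q p = (\<lambda>t. - basis2 p q t)"
  by (rule ext) (simp add: basis2_def wedge2_def split: prod.splits)

lemma basis2_same: "basis2 p p = (\<lambda>_. 0)"
  by (rule ext) (simp add: basis2_def wedge2_def split: prod.splits)

lemma supp_basis2: "supp (basis2 p q) \<subseteq> {(p, q), (q, p)}"
  unfolding supp_def by (rule subsetI, rule ccontr) (simp add: basis2_eq_delta delta_apply)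

lemma finite_supp_basis2: "finite (supp (basis2 p q))"
  by (rule finite_subset[OF supp_basis2]) simp

definition basis3 :: "'a \<Rightarrow> 'a \<Rightarrow> 'a \<Rightarrow> 'a \<times> 'a \<times> 'a \<Rightarrow> rat" where
  "basis3 a b c = wedge3 (delta a) (delta b) (delta c)"

lemma basis3_eq_delta:
  "basis3 a b c = (\<lambda>t. delta (a, b, c) t + delta (b, c, a) t + delta (c, a, b) t
                       - delta (a, c, b) t - delta (c, b, a) t - delta (b, a, c) t)"
proof
  fix t :: "'a \<times> 'a \<times> 'a"
  obtain x y z where t: "t = (x, y, z)" by (cases t)
  have triple: "delta p u * delta q v * delta r w = delta (p, q, r) (u, v, w)" for p q r u v w :: 'a
    by (cases "u = p"; cases "v = q"; cases "w = r"; simp add: delta_apply)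
  have perm: "delta (p, q, r) (y, z, x) = delta (r, p, q) (x, y, z)"
    "delta (p, q, r) (z, x, y) = delta (q, r, p) (x, y, z)"
    "delta (p, q, r) (x, z, y) = delta (p, r, q) (x, y, z)"
    "delta (p, q, r) (z, y, x) = delta (r, q, p) (x, y, z)"
    "delta (p, q, r) (y, x, z) = delta (q, p, r) (x, y, z)" for p q r :: 'a
    by (auto simp: delta_apply)
  show "basis3 a b c t = delta (a, b, c) t + delta (b, c, a) t + delta (c, a, b) t
                         - delta (a, c, b) t - delta (c, b, a) t - delta (b, a, c) t"
    unfolding t basis3_def wedge3_def by (simp only: prod.case triple perm)
qed

definition split_pair :: "'a::ab_group_add \<Rightarrow> 'a \<Rightarrow> 'a \<times> 'a \<Rightarrow> rat" where
  "split_pair h t = basis2 t (h - t)"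

lemma alternating_eq_lift_basis2:
  assumes fin: "finite (supp z)" and alt: "\<And>x y. z (y, x) = - z (x, y)"
  shows "z = lift_basis (1/2) (\<lambda>q. basis2 (fst q) (snd q)) z"
proof
  fix t :: "'a \<times> 'a"
  have swap: "delta (snd q, fst q) t = delta q (snd t, fst t)" for q :: "'a \<times> 'a"
    by (auto simp: delta_apply)
  have "lift_basis (1/2) (\<lambda>q. basis2 (fst q) (snd q)) z t
      = 1/2 * ((\<Sum>q\<in>supp z. z q * delta q t) - (\<Sum>q\<in>supp z. z q * delta q (snd t, fst t)))"
    by (simp add: lift_basis_def basis2_eq_delta swap right_diff_distrib sum_subtractf)
  also have "\<dots> = z t"
    using alt[of "fst t" "snd t"] by (simp add: sum_mult_delta[OF fin])
  finally show "z t = lift_basis (1/2) (\<lambda>q. basis2 (fst q) (snd q)) z t" ..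
qed

lemma br_delta:
  "br B (delta x) (delta y) = (\<lambda>z. of_int (B x y) * delta (x + y) z)"
proof
  fix z
  have "br B (delta x) (delta y) z = delta y (z - x) * of_int (B x (z - x))"
    unfolding br_def supp_delta by (simp add: delta_apply)
  also have "\<dots> = of_int (B x y) * delta (x + y) z"
  proof (cases "z = x + y")
    case True
    then show ?thesis by (simp add: delta_apply)
  next
    case False
    then have "z - x \<noteq> y" by (auto simp: algebra_simps)
    with False show ?thesis by (simp add: delta_apply)
  qed
  finally show "br B (delta x) (delta y) z = of_int (B x y) * delta (x + y) z" .
qed

lemma d2_eq_lift_basis: "d2 B = lift_basis (1/2) (\<lambda>q w. - br B (delta (fst q)) (delta (snd q)) w)"
  by (intro ext) (simp add: d2_def lift_basis_def split_def)

lemma ext2_eq_lift_basis: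
  "ext2 \<phi> = lift_basis (1/2) (\<lambda>q. wedge2 (\<phi> (delta (fst q))) (\<phi> (delta (snd q))))"
  by (intro ext) (simp add: ext2_def lift_basis_def split_def)

lemma d3_eq_lift_basis:
  "d3 B = lift_basis (1/6) (\<lambda>q t. - wedge2 (br B (delta (fst q)) (delta (fst (snd q)))) (delta (snd (snd q))) t
                                  + wedge2 (br B (delta (fst q)) (delta (snd (snd q)))) (delta (fst (snd q))) t
                                  - wedge2 (br B (delta (fst (snd q))) (delta (snd (snd q)))) (delta (fst q)) t)"
  by (intro ext) (simp only: d3_def lift_basis_def split_def prod.collapse)

lemma d3_lincomb:
  "finite (supp v) \<Longrightarrow> finite (supp w) \<Longrightarrow> d3 B (\<lambda>t. q * v t + w t) = (\<lambda>t. q * d3 B v t + d3 B w t)"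
  unfolding d3_eq_lift_basis by (rule lift_basis_lincomb)

lemma d2_lift_basis:
  assumes "finite (supp c)" and "\<And>p. p \<in> supp c \<Longrightarrow> finite (supp (F p))"
  shows "d2 B (lift_basis k F c) = lift_basis k (\<lambda>p. d2 B (F p)) c"
  using lift_basis_lift_basis[OF assms] by (simp only: d2_eq_lift_basis)

lemma d3_lift_basis:
  assumes "finite (supp c)" and "\<And>p. p \<in> supp c \<Longrightarrow> finite (supp (F p))"
  shows "d3 B (lift_basis k F c) = lift_basis k (\<lambda>p. d3 B (F p)) c"
  using lift_basis_lift_basis[OF assms] by (simp only: d3_eq_lift_basis)

lemma ext2_lift_basis:
  assumes "finite (supp c)" and "\<And>p. p \<in> supp c \<Longrightarrow> finite (supp (F p))"
  shows "ext2 \<phi> (lift_basis k F c) = lift_basis k (\<lambda>p. ext2 \<phi> (F p)) c"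
  using lift_basis_lift_basis[OF assms] by (simp only: ext2_eq_lift_basis)

lemma d2_apply:
  assumes "finite (supp z)"
  shows "d2 B z h = - 1/2 * (\<Sum>q\<in>{q \<in> supp z. fst q + snd q = h}. z q * of_int (B (fst q) (snd q)))"
proof -
  have "d2 B z h = 1/2 * (\<Sum>q\<in>supp z. - (if fst q + snd q = h then z q * of_int (B (fst q) (snd q)) else 0))"
    unfolding d2_eq_lift_basis lift_basis_def br_delta
    by (intro arg_cong[where f = "\<lambda>x. 1/2 * x"] sum.cong) (auto simp: delta_apply)
  then show ?thesis
    unfolding sum.inter_filter[OF assms] sum_negf by simp
qed

lemma lift_basis_weighted_cycle:
  assumes fin: "finite (supp z)" and cycle: "d2 B z = (\<lambda>_. 0)"
  shows "lift_basis k (\<lambda>q p. of_int (B (fst q) (snd q)) * R (fst q + snd q) p) z = (\<lambda>_. 0)"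
proof
  fix p
  let ?s = "\<lambda>q. fst q + snd q"
  let ?fibre = "\<lambda>h. {q \<in> supp z. ?s q = h}"
  have fibre: "(\<Sum>q\<in>?fibre h. z q * of_int (B (fst q) (snd q))) = 0" for h
    using d2_apply[OF fin, of B h] cycle by (simp add: fun_eq_iff)
  have "(\<Sum>q\<in>supp z. z q * (of_int (B (fst q) (snd q)) * R (?s q) p))
      = (\<Sum>h\<in>?s ` supp z. \<Sum>q\<in>?fibre h. z q * (of_int (B (fst q) (snd q)) * R (?s q) p))"
    by (rule sum.image_gen[OF fin])
  also have "\<dots> = (\<Sum>h\<in>?s ` supp z. R h p * (\<Sum>q\<in>?fibre h. z q * of_int (B (fst q) (snd q))))"
    by (rule sum.cong[OF refl]) (auto simp: sum_distrib_left mult_ac intro!: sum.cong)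
  also have "\<dots> = 0"
    by (simp add: fibre)
  finally show "lift_basis k (\<lambda>q p. of_int (B (fst q) (snd q)) * R (?s q) p) z p = 0"
    by (simp add: lift_basis_def)
qed

lemma d2_lift_basis_cycles:
  assumes "finite (supp z)"
    and "\<And>q. q \<in> supp z \<Longrightarrow> finite (supp (C q))" and "\<And>q. q \<in> supp z \<Longrightarrow> d2 B (C q) = (\<lambda>_. 0)"
  shows "d2 B (lift_basis k C z) = (\<lambda>_. 0)"
  using assms by (simp add: d2_lift_basis lift_basis_cong[of z _ "\<lambda>_ _. 0"] lift_basis_zero_kernel)

lemma d3_lift_basis_relations:
  assumes fin: "finite (supp z)" and alt: "\<And>x y. z (y, x) = - z (x, y)" and cycle: "d2 B z = (\<lambda>_. 0)"
    and C_fin: "\<And>q. q \<in> supp z \<Longrightarrow> finite (supp (C q))"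
    and W_fin: "\<And>q. q \<in> supp z \<Longrightarrow> finite (supp (W q))"
    and W: "\<And>q. q \<in> supp z \<Longrightarrow> d3 B (W q) = (\<lambda>t. ext2 \<phi> (C q) t
              + of_int (B (fst q) (snd q)) * R (fst q + snd q) t - basis2 (fst q) (snd q) t)"
  shows "d3 B (lift_basis (1/2) W z) = (\<lambda>t. ext2 \<phi> (lift_basis (1/2) C z) t - z t)"
proof -
  have "d3 B (lift_basis (1/2) W z) = lift_basis (1/2) (\<lambda>q t. ext2 \<phi> (C q) t
      + of_int (B (fst q) (snd q)) * R (fst q + snd q) t - basis2 (fst q) (snd q) t) z"
    using W by (simp add: d3_lift_basis[OF fin W_fin] cong: lift_basis_cong)
  also have "\<dots> = (\<lambda>t. ext2 \<phi> (lift_basis (1/2) C z) t - z t)"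
    using lift_basis_weighted_cycle[OF fin cycle, of "1/2" R] alternating_eq_lift_basis2[OF fin alt]
    by (simp add: ext2_lift_basis[OF fin C_fin] lift_basis_diff_kernel lift_basis_add_kernel)
  finally show ?thesis .
qed

lemma varpi1_delta: "varpi1 B (delta x) = (if x \<in> H1 B then delta x else (\<lambda>_. 0))"
  by (auto simp: varpi1_def delta_apply)

lemma ext2_varpi1_basis2:
  "ext2 (varpi1 B) (basis2 p q) = (\<lambda>t. if p \<in> H1 B \<and> q \<in> H1 B then basis2 p q t else 0)"
proof (cases "p = q")
  case True
  show ?thesis
    unfolding True basis2_same by (simp add: ext2_eq_lift_basis lift_basis_zero)
next
  case False
  have "ext2 (varpi1 B) (basis2 p q) = (\<lambda>t. 1/2 * (wedge2 (varpi1 B (delta p)) (varpi1 B (delta q)) t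
                                             - wedge2 (varpi1 B (delta q)) (varpi1 B (delta p)) t))"
    unfolding ext2_eq_lift_basis using False
    by (subst lift_basis_on[OF _ supp_basis2]) (auto simp: basis2_eq_delta delta_apply)
  moreover have "wedge2 (\<lambda>_. 0) b = (\<lambda>_. 0)" "wedge2 b (\<lambda>_. 0) = (\<lambda>_. 0)" for b :: "'a \<Rightarrow> rat"
    by (auto simp: wedge2_def)
  ultimately show ?thesis
    by (auto simp: varpi1_delta basis2_def[symmetric] basis2_swap[of p q])
qed

lemma additive_nonzero_common:
  fixes f g :: "'a::plus \<Rightarrow> 'b::monoid_add"
  assumes f_add: "\<And>y u. f (y + u) = f y + f u" and g_add: "\<And>y u. g (y + u) = g y + g u"
    and "f y \<noteq> 0" and "g u \<noteq> 0"
  obtains b where "f b \<noteq> 0" and "g b \<noteq> 0"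
proof -
  consider "g y \<noteq> 0" | "f u \<noteq> 0" | "g y = 0" "f u = 0"
    by blast
  then show thesis
  proof cases
    case 3
    then show thesis
      using that[of "y + u"] assms by (simp add: f_add g_add)
  qed (use that assms in blast)+
qed

section \<open>Boundaries for an alternating biadditive form\<close>

locale alternating_form =
  fixes B :: "'a::ab_group_add \<Rightarrow> 'a \<Rightarrow> int"
  assumes add_left [simp]: "\<And>x y z. B (x + y) z = B x z + B y z"
      and add_right [simp]: "\<And>x y z. B x (y + z) = B x y + B x z"
      and alternating [simp]: "\<And>x. B x x = 0"
begin

lemma zero_left [simp]: "B 0 y = 0"
  using add_left[of 0 0 y] by simp

lemma zero_right [simp]: "B x 0 = 0"
  using add_right[of x 0 0] by simp

lemma minus_left [simp]: "B (- x) y = - B x y"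
  using add_left[of x "- x" y] by simp

lemma minus_right [simp]: "B x (- y) = - B x y"
  using add_right[of x y "- y"] by simp

lemma diff_left [simp]: "B (x - y) z = B x z - B y z"
  using add_left[of x "- y" z] by simp

lemma diff_right [simp]: "B x (y - z) = B x y - B x z"
  using add_right[of x y "- z"] by simp

lemma skew: "B y x = - B x y"
proof -
  have "B (x + y) (x + y) = B x x + B y x + (B x y + B y y)"
    by (simp only: add_left add_right)
  then show ?thesis
    by (simp add: eq_neg_iff_add_eq_0)
qed

lemma mem_H1I: "B x y \<noteq> 0 \<Longrightarrow> x \<in> H1 B"
  by (auto simp: H1_def kermu_def)

lemma mem_H1I': "B y x \<noteq> 0 \<Longrightarrow> x \<in> H1 B"
  by (rule mem_H1I[of x y]) (simp add: skew[of y x])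

lemma mem_H1E:
  assumes "x \<in> H1 B"
  obtains y where "B y x \<noteq> 0"
  using assms by (auto simp: H1_def kermu_def skew[of x])

lemma not_mem_H1D:
  assumes "h \<notin> H1 B"
  shows "B h y = 0" and "B y h = 0"
  using assms by (auto simp: H1_def kermu_def skew[of y h])

lemma d2_basis2: "d2 B (basis2 p q) = (\<lambda>w. - of_int (B p q) * delta (p + q) w)"
proof (cases "p = q")
  case True
  show ?thesis
    unfolding True basis2_same by (simp add: d2_eq_lift_basis lift_basis_zero)
next
  case False
  then have "d2 B (basis2 p q) = (\<lambda>w. 1/2 * (- br B (delta p) (delta q) w + br B (delta q) (delta p) w))"
    unfolding d2_eq_lift_basis
    by (subst lift_basis_on[OF _ supp_basis2]) (auto simp: basis2_eq_delta delta_apply)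
  then show ?thesis
    by (auto simp: fun_eq_iff br_delta delta_apply skew[of q p] add.commute[of q p])
qed

lemma d3_basis3:
  "d3 B (basis3 a b c) = (\<lambda>t. - of_int (B a b) * basis2 (a + b) c t
                              + of_int (B a c) * basis2 (a + c) b t
                              - of_int (B b c) * basis2 (b + c) a t)"
proof -
  define F where "F x y z = (\<lambda>t. - of_int (B x y) * basis2 (x + y) z t
                                 + of_int (B x z) * basis2 (x + z) y t
                                 - of_int (B y z) * basis2 (y + z) x t)" for x y z
  have cyclic: "F y z x = F x y z" for x y z
    unfolding F_def by (rule ext) (simp add: skew[of y x] skew[of z x] add.commute[of y x] add.commute[of z x])
  have swap: "F y x z = (\<lambda>t. - F x y z t)" for x y z
    unfolding F_def by (rule ext) (simp add: skew[of y x] add.commute[of y x] algebra_simps)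
  have kernel: "- wedge2 (br B (delta x) (delta y)) (delta z) t + wedge2 (br B (delta x) (delta z)) (delta y) t
                 - wedge2 (br B (delta y) (delta z)) (delta x) t = F x y z t" for x y z t
    by (simp add: F_def br_delta basis2_def wedge2_def split_def right_diff_distrib mult.assoc)
  have d3_eq: "d3 B = lift_basis (1/6) (\<lambda>(x, y, z). F x y z)"
    by (intro ext) (simp only: d3_def lift_basis_def kernel split_def prod.collapse)
  have "d3 B (basis3 a b c) = (\<lambda>t. 1/6 * F a b c t + 1/6 * F b c a t + 1/6 * F c a b t
                               - 1/6 * F a c b t - 1/6 * F c b a t - 1/6 * F b a c t)"
    unfolding basis3_eq_delta d3_eq
    by (simp only: lift_basis_add lift_basis_diff finite_supp_add finite_supp_diff
                   supp_delta finite.emptyI finite.insertI lift_basis_delta prod.case)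
  also have "\<dots> = F a b c"
    using cyclic[of a b c] cyclic[of b c a] swap[of a b c] swap[of c a b] swap[of b c a]
    by (simp add: fun_eq_iff)
  finally show ?thesis
    by (simp only: F_def)
qed

definition boundaries :: "('a \<times> 'a \<Rightarrow> rat) set" where
  "boundaries = d3 B ` Lambda3 (QS (H1 B))"

lemma boundaries_zero: "(\<lambda>_. 0) \<in> boundaries"
proof -
  have "(\<lambda>_. 0) = d3 B (\<lambda>_. 0)"
    by (simp only: d3_eq_lift_basis lift_basis_zero)
  moreover have "(\<lambda>_. 0) \<in> Lambda3 (QS (H1 B))"
    unfolding Lambda3_def by (rule qspan.zero)
  ultimately show ?thesis
    unfolding boundaries_def by (rule image_eqI)
qed

lemma boundaries_lincomb:
  assumes "\<beta>1 \<in> boundaries" and "\<beta>2 \<in> boundaries"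
  shows "(\<lambda>t. q * \<beta>1 t + \<beta>2 t) \<in> boundaries"
proof -
  obtain w1 w2 where w: "w1 \<in> Lambda3 (QS (H1 B))" "w2 \<in> Lambda3 (QS (H1 B))"
    and \<beta>: "\<beta>1 = d3 B w1" "\<beta>2 = d3 B w2"
    using assms unfolding boundaries_def by blast
  have "(\<lambda>t. q * \<beta>1 t + \<beta>2 t) = d3 B (\<lambda>t. q * w1 t + w2 t)"
    unfolding \<beta> using w by (intro d3_lincomb[symmetric] finite_supp_Lambda3_QS)
  moreover have "(\<lambda>t. q * w1 t + w2 t) \<in> Lambda3 (QS (H1 B))"
    using w unfolding Lambda3_def by (rule qspan_lincomb)
  ultimately show ?thesis
    unfolding boundaries_def by (rule image_eqI)
qed

lemma boundaries_scale: "\<beta> \<in> boundaries \<Longrightarrow> (\<lambda>t. q * \<beta> t) \<in> boundaries"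
  using boundaries_lincomb[OF _ boundaries_zero, of \<beta> q] by simp

lemma boundaries_eqI: "\<beta> \<in> boundaries \<Longrightarrow> (\<And>t. \<beta> t = \<gamma> t) \<Longrightarrow> \<gamma> \<in> boundaries"
  by (metis ext)

lemma d3_basis3_boundary:
  assumes "a \<in> H1 B" "b \<in> H1 B" "c \<in> H1 B"
  shows "d3 B (basis3 a b c) \<in> boundaries"
proof -
  have "delta x \<in> QS (H1 B)" if "x \<in> H1 B" for x
    using that by (simp add: QS_def supp_delta)
  then have "basis3 a b c \<in> Lambda3 (QS (H1 B))"
    unfolding Lambda3_def basis3_def using assms by (blast intro: qspan_base)
  then show ?thesis
    unfolding boundaries_def by blast
qed

lemma mem_boundaries_iff: "\<beta> \<in> boundaries \<longleftrightarrow> (\<exists>w\<in>Lambda3 (QS (H1 B)). d3 B w = \<beta>)"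
  by (auto simp: boundaries_def)

lemma boundaries_scale_cancel:
  assumes "(\<lambda>t. c * \<beta> t) \<in> boundaries" and "c \<noteq> 0"
  shows "\<beta> \<in> boundaries"
  using boundaries_scale[OF assms(1), of "1 / c"] assms(2) by simp

subsection \<open>Relations among chains of one weight\<close>

lemma triple_relation:
  assumes "a \<in> H1 B" "b \<in> H1 B" "h - a - b \<in> H1 B"
  shows "(\<lambda>t. of_int (B a b) * (split_pair h a t + split_pair h b t - split_pair h (a + b) t)
              + of_int (B b h) * split_pair h a t - of_int (B a h) * split_pair h b t) \<in> boundaries"
proof -
  have "basis2 (a + b) (h - a - b) = split_pair h (a + b)"
    by (simp add: split_pair_def diff_diff_eq)
  moreover have "basis2 (a + (h - a - b)) b = (\<lambda>t. - split_pair h b t)"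
    by (simp add: split_pair_def basis2_swap[of b "h - b"] algebra_simps)
  moreover have "basis2 (b + (h - a - b)) a = (\<lambda>t. - split_pair h a t)"
    by (simp add: split_pair_def basis2_swap[of a "h - a"] algebra_simps)
  ultimately show ?thesis
    by (intro boundaries_eqI[OF d3_basis3_boundary[OF assms]])
       (simp add: d3_basis3 skew[of b a] algebra_simps)
qed

lemma proportional_relation:
  assumes a: "B a h \<noteq> 0" and b: "B b h \<noteq> 0" and ab: "B a h + B b h \<noteq> 0"
  shows "(\<lambda>t. of_int (B b h) * split_pair h a t - of_int (B a h) * split_pair h b t) \<in> boundaries"
proof -
  have in_H1: "a \<in> H1 B" "b \<in> H1 B" "h \<in> H1 B" "a + b \<in> H1 B" "b + h \<in> H1 B"
    "h - a - b \<in> H1 B" "h - a - (b + h) \<in> H1 B" "h - h - b \<in> H1 B" "h - h - (a + b) \<in> H1 B"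
    using a b ab by (auto intro: mem_H1I[of _ h] mem_H1I'[of a])
  note D1 = triple_relation[OF in_H1(1,2,6)]
  note D2 = triple_relation[OF in_H1(1,5,7)]
  note D3 = triple_relation[OF in_H1(3,2,8), unfolded add.commute[of h b]]
  note D4 = triple_relation[OF in_H1(3,4,9), unfolded add.assoc add.commute[of h]]
  define c where "c = B a h * B b h * (B a h + B b h)"
  have "(\<lambda>t. of_int c * (of_int (B b h) * split_pair h a t - of_int (B a h) * split_pair h b t))
        \<in> boundaries"
    by (rule boundaries_eqI[OF boundaries_lincomb[OF D1 boundaries_lincomb[OF D2
          boundaries_lincomb[OF D3 boundaries_scale[OF D4]]]],
          of "of_int ((B a h + B a b) * B b h * (B a h + B b h))" "- of_int (B a b * B b h * (B a h + B b h))"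
          "of_int (B a b * B a b * (B a h + B b h))" "- of_int (B a b * (B a b + B a h) * B b h)"])
       (simp add: c_def skew[of h a] skew[of h b] algebra_simps)
  moreover have "of_int c \<noteq> (0 :: rat)"
    using a b ab by (simp add: c_def)
  ultimately show ?thesis
    by (rule boundaries_scale_cancel)
qed

lemma orthogonal_relation:
  assumes h: "h \<in> H1 B" and x: "x \<in> H1 B" and hx: "h - x \<in> H1 B" and orth: "B x h = 0"
  shows "split_pair h x \<in> boundaries"
proof -
  obtain y where y: "B y h \<noteq> 0"
    using h by (rule mem_H1E)
  obtain u where "B u (h - x) \<noteq> 0"
    using hx by (rule mem_H1E)
  then have u: "B (x - h) u \<noteq> 0"
    by (simp add: skew[of _ u])
  txt \<open>Such \<open>b\<close> makes the triple relation for \<open>(x, b)\<close> and the proportional relation for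
    \<open>(b, x + b)\<close> nondegenerate.\<close>
  obtain b where b: "B b h \<noteq> 0" and "B (x - h) b \<noteq> 0"
    by (rule additive_nonzero_common[of "\<lambda>y. B y h" "\<lambda>y. B (x - h) y", OF _ _ y u]) simp_all
  then have xb: "B x b + B b h \<noteq> 0"
    by (simp add: skew[of h b])
  have "b \<in> H1 B" "h - x - b \<in> H1 B"
    using b orth by (auto intro: mem_H1I[of _ h])
  note D = triple_relation[OF x this]
  note G = proportional_relation[of b h "x + b"]
  have "(\<lambda>t. of_int (B b h * (B x b + B b h)) * split_pair h x t) \<in> boundaries"
    by (rule boundaries_eqI[OF boundaries_lincomb[OF D boundaries_scale[OF G]],
          of "of_int (B b h)" "- of_int (B x b)"])
       (use b orth in \<open>simp_all add: algebra_simps\<close>)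
  then show ?thesis
    by (rule boundaries_scale_cancel) (use b xb in simp)
qed

lemma split_pair_proportional:
  assumes x0: "B x0 h \<noteq> 0" and x: "x \<in> H1 B" and hx: "h - x \<in> H1 B"
  shows "(\<lambda>t. of_int (B x0 h) * split_pair h x t - of_int (B x h) * split_pair h x0 t) \<in> boundaries"
proof (cases "B x h = 0")
  case True
  have "h \<in> H1 B"
    using x0 by (rule mem_H1I')
  from boundaries_scale[OF orthogonal_relation[OF this x hx True], of "of_int (B x0 h)"] True
  show ?thesis by simp
next
  case False
  show ?thesis
  proof (cases "B x h + B x0 h = 0")
    case False
    with \<open>B x h \<noteq> 0\<close> x0 show ?thesis
      by (rule proportional_relation)
  next
    case True
    note G1 = proportional_relation[of x h "x0 + x0"]
    note G2 = proportional_relation[of "x0 + x0" h x0]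
    have "(\<lambda>t. of_int (2 * B x0 h) * (of_int (B x0 h) * split_pair h x t - of_int (B x h) * split_pair h x0 t))
          \<in> boundaries"
      by (rule boundaries_eqI[OF boundaries_lincomb[OF G1 boundaries_scale[OF G2]],
            of "of_int (B x0 h)" "of_int (B x h)"])
         (use x0 \<open>B x h \<noteq> 0\<close> True in \<open>simp_all add: algebra_simps\<close>)
    then show ?thesis
      by (rule boundaries_scale_cancel) (use x0 in simp)
  qed
qed

lemma kermu_relation:
  assumes h: "h \<notin> H1 B" and x: "x \<in> H1 B"
  shows "(\<lambda>t. 2 * split_pair h x t - split_pair h (x + x) t) \<in> boundaries"
proof -
  obtain u where u: "B u x \<noteq> 0"
    using x by (rule mem_H1E)
  have B_h: "B y h = 0" "B h y = 0" for y
    using h by (rule not_mem_H1D)+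
  have in_H1: "u \<in> H1 B" "x + x - u \<in> H1 B" "x - u \<in> H1 B"
    "h - (x + x - u) - u \<in> H1 B" "h - x - (x - u) \<in> H1 B" "h - (x - u) - u \<in> H1 B"
    using u by (auto intro: mem_H1I[of _ x] mem_H1I[of _ u] simp: B_h skew[of x u])
  note D1 = triple_relation[OF in_H1(2,1,4)]
  note D2 = triple_relation[OF x in_H1(3,5)]
  note D3 = triple_relation[OF in_H1(3,1,6)]
  have "(\<lambda>t. of_int (2 * B u x) * (2 * split_pair h x t - split_pair h (x + x) t)) \<in> boundaries"
    by (rule boundaries_eqI[OF boundaries_lincomb[OF D1 boundaries_lincomb[OF D2 boundaries_scale[OF D3]]],
          of "-1" 2 2])
       (simp add: B_h skew[of x u] algebra_simps)
  then show ?thesis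
    by (rule boundaries_scale_cancel) (use u in simp)
qed

lemma kermu_lift:
  assumes h: "h \<notin> H1 B" and x: "x \<in> H1 B"
  shows "\<exists>c\<in>Lambda2 gK. d2 B c = (\<lambda>_. 0) \<and>
           (\<lambda>t. ext2 (varpi1 B) c t - split_pair h x t) \<in> boundaries"
proof -
  obtain u where u: "B u x \<noteq> 0"
    using x by (rule mem_H1E)
  have B_h: "B y h = 0" "B h y = 0" for y
    using h by (rule not_mem_H1D)+
  have in_H1: "x + x \<in> H1 B" "h - x \<in> H1 B" "h - x - x \<in> H1 B" "h + x \<in> H1 B"
    using u by (auto intro: mem_H1I[of _ u] simp: B_h skew[of x u])
  have generator: "(\<lambda>z. delta (p + q) z - delta p z - delta q z) \<in> qspan
      {(\<lambda>z. delta (x + y) z - delta x z - delta y z) | x y. True}" for p q :: 'a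
    by (rule qspan_base) blast
  define a where "a = (\<lambda>t. delta x t - 1/2 * delta (x + x) t)"
  define b where "b = (\<lambda>t. delta (h - x) t - 1/2 * delta (h - x - x) t - 1/2 * delta h t)"
  have "a \<in> gK"
    using qspan_lincomb[OF generator[of x x] qspan.zero, of "- 1/2"]
    by (simp add: a_def gK_def algebra_simps)
  moreover have "b \<in> gK"
    using qspan_lincomb[OF generator[of "h - x - x" x] qspan_lincomb[OF generator[of "h - x" x] qspan.zero],
        of "1/2" "- 1/2"]
    by (simp add: b_def gK_def algebra_simps)
  ultimately have "wedge2 a b \<in> Lambda2 gK"
    unfolding Lambda2_def by (blast intro: qspan_base)
  then have c_gK: "(\<lambda>t. 2/3 * wedge2 a b t) \<in> Lambda2 gK"
    unfolding Lambda2_def using qspan_lincomb[OF _ qspan.zero, of "wedge2 a b" _ "2/3"] by simp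
  define c where "c = (\<lambda>t. 2/3 * wedge2 a b t)"
  have c_basis: "c = (\<lambda>t. 2/3 * basis2 x (h - x) t - 1/3 * basis2 x (h - x - x) t - 1/3 * basis2 x h t
      - 1/3 * basis2 (x + x) (h - x) t + 1/6 * basis2 (x + x) (h - x - x) t + 1/6 * basis2 (x + x) h t)"
    by (intro ext) (simp add: c_def a_def b_def basis2_def wedge2_def split_def algebra_simps)
  txt \<open>Every wedge in \<open>c\<close> pairs a multiple of \<open>x\<close> with \<open>h\<close> minus a multiple of \<open>x\<close>,
    and \<open>B\<close> vanishes on such pairs.\<close>
  have "d2 B c = (\<lambda>_. 0)"
    unfolding c_basis d2_eq_lift_basis
    by (simp only: lift_basis_add lift_basis_diff lift_basis_scale finite_supp_add finite_supp_diff
        finite_supp_scale finite_supp_basis2,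
        simp only: d2_eq_lift_basis[symmetric] d2_basis2, simp add: B_h)
  moreover have "(\<lambda>t. ext2 (varpi1 B) c t - split_pair h x t) \<in> boundaries"
  proof -
    have ext2_c: "ext2 (varpi1 B) c = (\<lambda>t. 2/3 * basis2 x (h - x) t - 1/3 * basis2 x (h - x - x) t
        - 1/3 * basis2 (x + x) (h - x) t + 1/6 * basis2 (x + x) (h - x - x) t)"
      unfolding c_basis ext2_eq_lift_basis
      by (simp only: lift_basis_add lift_basis_diff lift_basis_scale finite_supp_add finite_supp_diff
          finite_supp_scale finite_supp_basis2,
          simp only: ext2_eq_lift_basis[symmetric] ext2_varpi1_basis2, simp add: x h in_H1)
    note K = kermu_relation[OF h x]
    note Z1 = orthogonal_relation[of "h - x" x]
    note Z2 = orthogonal_relation[of "h + x" "x + x"]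
    show ?thesis
      by (rule boundaries_eqI[OF boundaries_lincomb[OF K boundaries_lincomb[OF Z1 boundaries_scale[OF Z2]]],
            of "- 1/6" "- 1/3" "- 1/3"])
         (simp_all add: ext2_c split_pair_def x in_H1 in_H1(3)[unfolded diff_diff_eq] B_h algebra_simps)
  qed
  ultimately show ?thesis
    using c_gK unfolding c_def by blast
qed

text \<open>Normalised by \<open>split_pair_proportional\<close> so that \<open>split_pair h x\<close> is homologous to
  \<open>B x h \<cdot> weight_rep h\<close>; on \<open>kermu B\<close> it is zero, and there \<open>B x h = 0\<close>.\<close>
definition weight_rep :: "'a \<Rightarrow> 'a \<times> 'a \<Rightarrow> rat" where
  "weight_rep h = (if h \<in> H1 B
     then (let x0 = SOME x0. B x0 h \<noteq> 0 in (\<lambda>t. split_pair h x0 t / of_int (B x0 h)))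
     else (\<lambda>_. 0))"

lemma basis2_homologous:
  assumes x: "x \<in> H1 B" and y: "y \<in> H1 B"
  shows "\<exists>c\<in>Lambda2 gK. d2 B c = (\<lambda>_. 0) \<and>
           (\<lambda>t. ext2 (varpi1 B) c t + of_int (B x y) * weight_rep (x + y) t - basis2 x y t) \<in> boundaries"
proof -
  let ?h = "x + y"
  have pair: "split_pair ?h x = basis2 x y"
    by (simp add: split_pair_def)
  have hx: "?h - x \<in> H1 B"
    using y by simp
  show ?thesis
  proof (cases "?h \<in> H1 B")
    case True
    define x0 where "x0 = (SOME x0. B x0 ?h \<noteq> 0)"
    obtain y0 where "B y0 ?h \<noteq> 0"
      using True by (rule mem_H1E)
    then have x0: "B x0 ?h \<noteq> 0"
      unfolding x0_def by (rule someI)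
    have "weight_rep ?h = (\<lambda>t. split_pair ?h x0 t / of_int (B x0 ?h))"
      by (simp only: weight_rep_def True x0_def Let_def if_True)
    then have "(\<lambda>t. of_int (B x y) * weight_rep ?h t - basis2 x y t) \<in> boundaries"
      by (intro boundaries_eqI[OF boundaries_scale[OF split_pair_proportional[OF x0 x hx]],
            of "- 1 / of_int (B x0 ?h)"])
         (use x0 in \<open>simp add: pair field_simps\<close>)
    moreover have "ext2 (varpi1 B) (\<lambda>_. 0) = (\<lambda>_. 0)" "d2 B (\<lambda>_. 0) = (\<lambda>_. 0)"
      by (simp_all only: ext2_eq_lift_basis d2_eq_lift_basis lift_basis_zero)
    moreover have "(\<lambda>_. 0) \<in> Lambda2 gK"
      unfolding Lambda2_def by (rule qspan.zero)
    ultimately show ?thesis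
      by force
  next
    case False
    then have "weight_rep ?h = (\<lambda>_. 0)"
      by (simp add: weight_rep_def)
    with kermu_lift[OF False x] show ?thesis
      by (simp add: pair)
  qed
qed

lemma cycle_homologous_to_gK:
  assumes z: "z \<in> Lambda2 (QS (H1 B))" and cycle: "d2 B z = (\<lambda>_. 0)"
  shows "\<exists>c\<in>Lambda2 gK. d2 B c = (\<lambda>_. 0) \<and>
           (\<exists>w\<in>Lambda3 (QS (H1 B)). d3 B w = (\<lambda>t. ext2 (varpi1 B) c t - z t))"
proof -
  have fin: "finite (supp z)"
    using z by (rule finite_supp_Lambda2_QS)
  let ?rel = "\<lambda>c q t. ext2 (varpi1 B) c t
      + of_int (B (fst q) (snd q)) * weight_rep (fst q + snd q) t - basis2 (fst q) (snd q) t"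
  have "\<forall>q\<in>supp z. \<exists>c. c \<in> Lambda2 gK \<and> d2 B c = (\<lambda>_. 0) \<and> ?rel c q \<in> boundaries"
  proof
    fix q
    assume "q \<in> supp z"
    then have "fst q \<in> H1 B" "snd q \<in> H1 B"
      using supp_Lambda2_QS[OF z] by (auto simp: mem_Times_iff)
    then show "\<exists>c. c \<in> Lambda2 gK \<and> d2 B c = (\<lambda>_. 0) \<and> ?rel c q \<in> boundaries"
      using basis2_homologous by blast
  qed
  from bchoice[OF this] obtain C where
    C: "\<forall>q\<in>supp z. C q \<in> Lambda2 gK \<and> d2 B (C q) = (\<lambda>_. 0) \<and> ?rel (C q) q \<in> boundaries"
    by blast
  then have "\<forall>q\<in>supp z. \<exists>w. w \<in> Lambda3 (QS (H1 B)) \<and> d3 B w = ?rel (C q) q"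
    by (auto simp: mem_boundaries_iff)
  from bchoice[OF this] obtain W where
    W: "\<forall>q\<in>supp z. W q \<in> Lambda3 (QS (H1 B)) \<and> d3 B (W q) = ?rel (C q) q"
    by blast
  have "lift_basis (1/2) C z \<in> Lambda2 gK"
    unfolding Lambda2_def using fin C by (intro lift_basis_in_qspan) (auto simp: Lambda2_def)
  moreover have "lift_basis (1/2) W z \<in> Lambda3 (QS (H1 B))"
    unfolding Lambda3_def using fin W by (intro lift_basis_in_qspan) (auto simp: Lambda3_def)
  moreover have "d2 B (lift_basis (1/2) C z) = (\<lambda>_. 0)"
    by (rule d2_lift_basis_cycles[OF fin]) (use C in \<open>auto intro: finite_supp_Lambda2_gK\<close>)
  moreover have "d3 B (lift_basis (1/2) W z) = (\<lambda>t. ext2 (varpi1 B) (lift_basis (1/2) C z) t - z t)"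
    by (rule d3_lift_basis_relations[OF fin Lambda2_alternating[OF z] cycle])
       (use C W in \<open>auto intro: finite_supp_Lambda2_gK finite_supp_Lambda3_QS\<close>)
  ultimately show ?thesis
    by blast
qed

end

theorem theorem5p1:
  fixes B :: "'a::ab_group_add \<Rightarrow> 'a \<Rightarrow> int"
  assumes add_left: "\<And>x y z. B (x + y) z = B x z + B y z"
      and add_right: "\<And>x y z. B x (y + z) = B x y + B x z"
      and alternating: "\<And>x. B x x = 0"
      and nonzero: "\<exists>x y. B x y \<noteq> 0"
  shows "\<forall>z\<in>Lambda2 (QS (H1 B)). d2 B z = (\<lambda>_. 0) \<longrightarrow>
           (\<exists>c\<in>Lambda2 gK. d2 B c = (\<lambda>_. 0) \<and>
              (\<exists>w\<in>Lambda3 (QS (H1 B)).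
                  d3 B w = (\<lambda>p. ext2 (varpi1 B) c p - z p)))"
proof -
  interpret alternating_form B
    by unfold_locales (fact add_left add_right alternating)+
  show ?thesis
    using cycle_homologous_to_gK by blast
qed

end
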